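(* Let $\alpha>0$ and $g,h\in\mathbb{R}$ with $h>g$ and $g\neq 1$, and put $\gamma=h-g$, $\lambda=1-g$. Suppose there is an integer $N\geq 1$ with $N\gamma-g=-1$. Let $F_0\in(0,1)$ and $X_0\in\mathbb{R}$, and let $F$ be a differentiable function on an interval $I\ni X_0$ with values in $(0,1)$ satisfying $$\frac{dF}{dX}=\alpha\,(F^g-F^h),\qquad F(X_0)=F_0 .$$ Then for every $X\in I$, writing $F=F(X)$, $$X=X_0+\frac{1}{\alpha}\left[\ln\!\left(\frac{F}{F_0}\right)+\sum_{k=0,\,k\neq N}^{\infty}\frac{F^{k\gamma+\lambda}-F_0^{k\gamma+\lambda}}{k\gamma+\lambda}\right].$$
   Context: The equation $dF/dX=\alpha(F^g-F^h)$ with $\alpha>0$, $h>g$ defines the S-distribution ($F$ the cumulative distribution function). The existence of such an $N$ is equivalent to $g>1$ and $h=(1+N^{-1})g-N^{-1}$. *)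

theory Defs
  imports "HOL-Analysis.Analysis"
begin

end

theory Submission
  imports Defs
begin

text \<open>Put \<open>\<gamma> = h - g\<close>; the hypothesis on \<open>N\<close> says \<open>g = N\<gamma> + 1\<close>, so that
  \<open>1 / (F\<^sup>g - F\<^sup>h) = F\<^sup>-\<^sup>g / (1 - F\<^sup>\<gamma>) = \<Sum>\<^sub>k F\<^bsup>(k - N)\<gamma> - 1\<^esup>\<close>.
  Integrating term by term, the term \<open>k = N\<close> gives \<open>ln F\<close>, the terms \<open>k < N\<close> give powers of \<open>F\<close>,
  and the tail \<open>k > N\<close> sums to \<open>- ln (1 - F\<^sup>\<gamma>) / \<gamma>\<close>. This closed-form primitive \<open>G = S_primitive N \<gamma>\<close> of
  \<open>1 / (F\<^sup>g - F\<^sup>h)\<close> turns the ODE into \<open>(G \<circ> F)' = \<alpha>\<close>, so \<open>\<alpha> (X - X\<^sub>0) = G (F X) - G F\<^sub>0\<close>;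
  expanding the logarithm back into its power series yields the stated series.\<close>

lemma sums_ln_one_minus_diff:
  fixes a b :: real
  assumes "\<bar>a\<bar> < 1" "\<bar>b\<bar> < 1"
  shows "(\<lambda>n. (a ^ n - b ^ n) / real n) sums (ln (1 - b) - ln (1 - a))"
proof -
  have "(\<lambda>n. - (b ^ n) / real n) sums ln (1 - b)"
    using ln_series'[of "- b"] assms(2) by simp
  moreover have "(\<lambda>n. - (a ^ n) / real n) sums ln (1 - a)"
    using ln_series'[of "- a"] assms(1) by simp
  ultimately show ?thesis
    by (rule sums_diff[THEN sums_cong[THEN iffD1, rotated]]) (simp add: diff_divide_distrib)
qed

lemma separable_ode_solution:
  fixes F G \<phi> :: "real \<Rightarrow> real"
  assumes I: "is_interval I" "x0 \<in> I" "x \<in> I"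
    and F_in: "\<And>x. x \<in> I \<Longrightarrow> F x \<in> U"
    and G_deriv: "\<And>y. y \<in> U \<Longrightarrow> (G has_real_derivative 1 / \<phi> y) (at y)"
    and \<phi>_nonzero: "\<And>y. y \<in> U \<Longrightarrow> \<phi> y \<noteq> 0"
    and ode: "\<And>x. x \<in> I \<Longrightarrow> (F has_real_derivative c * \<phi> (F x)) (at x within I)"
  shows "G (F x) - G (F x0) = c * (x - x0)"
proof -
  have "\<exists>C. \<forall>x\<in>I. G (F x) - c * x = C"
  proof (rule has_field_derivative_zero_constant)
    show "convex I" using I(1) by (simp add: is_interval_convex)
  next
    fix x assume x: "x \<in> I"
    have "((\<lambda>x. G (F x) - c * x) has_real_derivative
            1 / \<phi> (F x) * (c * \<phi> (F x)) - c) (at x within I)"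
      using DERIV_chain'[OF ode[OF x] G_deriv[OF F_in[OF x]]]
      by (auto intro!: derivative_eq_intros)
    then show "((\<lambda>x. G (F x) - c * x) has_real_derivative 0) (at x within I)"
      using \<phi>_nonzero[OF F_in[OF x]] by simp
  qed
  then obtain C where "\<And>x. x \<in> I \<Longrightarrow> G (F x) - c * x = C" by blast
  from this[OF I(3)] this[OF I(2)] show ?thesis by (simp add: algebra_simps)
qed

definition S_primitive :: "nat \<Rightarrow> real \<Rightarrow> real \<Rightarrow> real" where
  "S_primitive N \<gamma> y = ln y
     + (\<Sum>k<N. y powr ((real k - real N) * \<gamma>) / ((real k - real N) * \<gamma>))
     - ln (1 - y powr \<gamma>) / \<gamma>"

lemma S_primitive_derivative_identity:
  fixes y \<gamma> :: real
  assumes "\<gamma> > 0" "0 < y" "y < 1"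
  shows "(1 / y + (\<Sum>k<N. y powr ((real k - real N) * \<gamma> - 1))
            + y powr (\<gamma> - 1) / (1 - y powr \<gamma>))
         * (y powr (real N * \<gamma> + 1) - y powr ((real N + 1) * \<gamma> + 1)) = 1"
proof -
  define u where "u = y powr \<gamma>"
  have u: "0 < u" "u < 1" using assms powr01_less_one[of y \<gamma>] by (simp_all add: u_def)
  have y_g: "y powr (real N * \<gamma> + 1) = u ^ N * y"
    using assms by (simp add: powr_add u_def powr_power mult.commute)
  have y_h: "y powr ((real N + 1) * \<gamma> + 1) = u ^ N * y * u"
    using assms by (simp add: powr_add u_def powr_power algebra_simps)
  have "y powr ((real k - real N) * \<gamma> - 1) * (u ^ N * y) = u ^ k" for k
  proof -
    have "y powr ((real k - real N) * \<gamma> - 1) * (u ^ N * y)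
        = y powr ((real k - real N) * \<gamma> - 1 + (real N * \<gamma> + 1))"
      using assms by (simp only: y_g[symmetric] powr_add)
    also have "\<dots> = u ^ k"
      using assms by (simp add: u_def powr_power algebra_simps)
    finally show ?thesis .
  qed
  then have sum_part:
    "(\<Sum>k<N. y powr ((real k - real N) * \<gamma> - 1)) * (u ^ N * y) * (1 - u) = 1 - u ^ N"
    using u by (simp add: sum_distrib_right sum_gp_strict)
  have last_part: "y powr (\<gamma> - 1) * y = u" using assms by (simp add: u_def powr_diff)
  have "(1 / y + (\<Sum>k<N. y powr ((real k - real N) * \<gamma> - 1)) + y powr (\<gamma> - 1) / (1 - u))
          * (u ^ N * y - u ^ N * y * u)
      = u ^ N * (1 - u)
        + (\<Sum>k<N. y powr ((real k - real N) * \<gamma> - 1)) * (u ^ N * y) * (1 - u)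
        + y powr (\<gamma> - 1) * y * u ^ N"
    using assms u by (simp add: field_simps)
  also have "\<dots> = 1"
    unfolding sum_part last_part by (simp add: algebra_simps)
  finally show ?thesis unfolding y_g y_h u_def .
qed

lemma S_primitive_has_real_derivative:
  fixes y \<gamma> :: real
  assumes "\<gamma> > 0" "0 < y" "y < 1"
  shows "(S_primitive N \<gamma> has_real_derivative
           1 / (y powr (real N * \<gamma> + 1) - y powr ((real N + 1) * \<gamma> + 1))) (at y)"
proof -
  have u: "y powr \<gamma> < 1" using assms by (simp add: powr01_less_one)
  have "((\<lambda>y. \<Sum>k<N. y powr ((real k - real N) * \<gamma>) / ((real k - real N) * \<gamma>))
         has_real_derivative (\<Sum>k<N. ((real k - real N) * \<gamma>)
             * y powr ((real k - real N) * \<gamma> - 1) / ((real k - real N) * \<gamma>))) (at y)"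
    using assms(2) by (intro DERIV_sum DERIV_cdivide has_real_derivative_powr)
  also have "(\<Sum>k<N. ((real k - real N) * \<gamma>)
                * y powr ((real k - real N) * \<gamma> - 1) / ((real k - real N) * \<gamma>))
           = (\<Sum>k<N. y powr ((real k - real N) * \<gamma> - 1))"
    using assms(1) by (intro sum.cong) auto
  finally have powers:
    "((\<lambda>y. \<Sum>k<N. y powr ((real k - real N) * \<gamma>) / ((real k - real N) * \<gamma>))
       has_real_derivative (\<Sum>k<N. y powr ((real k - real N) * \<gamma> - 1))) (at y)" .
  have log: "((\<lambda>y. ln (1 - y powr \<gamma>) / \<gamma>)
               has_real_derivative - (y powr (\<gamma> - 1) / (1 - y powr \<gamma>))) (at y)"
    using assms u by (auto intro!: derivative_eq_intros)
  have "(S_primitive N \<gamma> has_real_derivative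
          1 / y + (\<Sum>k<N. y powr ((real k - real N) * \<gamma> - 1))
            + y powr (\<gamma> - 1) / (1 - y powr \<gamma>)) (at y)"
    (is "(_ has_real_derivative ?D) _")
    unfolding S_primitive_def[abs_def]
    using DERIV_diff[OF DERIV_add[OF DERIV_ln_divide powers] log] assms(2) by simp
  moreover have "?D = 1 / (y powr (real N * \<gamma> + 1) - y powr ((real N + 1) * \<gamma> + 1))"
    using S_primitive_derivative_identity[OF assms, of N] by (auto simp: eq_divide_eq)
  ultimately show ?thesis by simp
qed

lemma S_series_sums:
  fixes a b \<gamma> :: real
  assumes "\<gamma> > 0" "0 < a" "a < 1" "0 < b" "b < 1"
  shows "(\<lambda>k. if k = N then 0 else
            (a powr ((real k - real N) * \<gamma>) - b powr ((real k - real N) * \<gamma>))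
              / ((real k - real N) * \<gamma>))
         sums (S_primitive N \<gamma> a - S_primitive N \<gamma> b - ln (a / b))" (is "?f sums _")
proof -
  have shift: "?f (m + N) = ((a powr \<gamma>) ^ m - (b powr \<gamma>) ^ m) / real m / \<gamma>" for m
    using assms by (cases "m = 0") (simp_all add: powr_power mult.commute)
  have "\<bar>a powr \<gamma>\<bar> < 1" "\<bar>b powr \<gamma>\<bar> < 1"
    using assms by (simp_all add: powr01_less_one)
  then have "(\<lambda>m. ?f (m + N)) sums ((ln (1 - b powr \<gamma>) - ln (1 - a powr \<gamma>)) / \<gamma>)"
    unfolding shift by (intro sums_divide sums_ln_one_minus_diff)
  then have "?f sums ((ln (1 - b powr \<gamma>) - ln (1 - a powr \<gamma>)) / \<gamma> + sum ?f {..<N})"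
    by (rule sums_iff_shift[of ?f N, THEN iffD1])
  moreover have "sum ?f {..<N}
      = (\<Sum>k<N. a powr ((real k - real N) * \<gamma>) / ((real k - real N) * \<gamma>))
        - (\<Sum>k<N. b powr ((real k - real N) * \<gamma>) / ((real k - real N) * \<gamma>))"
    by (simp add: sum_subtractf[symmetric] diff_divide_distrib)
  moreover have "S_primitive N \<gamma> a - S_primitive N \<gamma> b - ln (a / b)
      = (ln (1 - b powr \<gamma>) - ln (1 - a powr \<gamma>)) / \<gamma>
        + ((\<Sum>k<N. a powr ((real k - real N) * \<gamma>) / ((real k - real N) * \<gamma>))
           - (\<Sum>k<N. b powr ((real k - real N) * \<gamma>) / ((real k - real N) * \<gamma>)))"
    using assms by (simp add: S_primitive_def ln_div diff_divide_distrib)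
  ultimately show ?thesis by simp
qed

theorem mainTheorem3:
  fixes \<alpha> g h F0 X0 :: real and N :: nat and I :: "real set" and F :: "real \<Rightarrow> real"
  assumes alpha_pos: "\<alpha> > 0"
    and hg: "h > g" and g1: "g \<noteq> 1"
    and N1: "N \<ge> 1" and NC: "real N * (h - g) - g = -1"
    and F0: "0 < F0" "F0 < 1"
    and I: "is_interval I" "X0 \<in> I"
    and Frange: "\<And>x. x \<in> I \<Longrightarrow> 0 < F x \<and> F x < 1"
    and ode: "\<And>x. x \<in> I \<Longrightarrow>
       (F has_real_derivative \<alpha> * (F x powr g - F x powr h)) (at x within I)"
    and init: "F X0 = F0"
    and X: "X \<in> I"
  shows "\<exists>S. (\<lambda>k::nat. if k = N then 0 else
             (F X powr (real k * (h - g) + (1 - g)) - F0 powr (real k * (h - g) + (1 - g)))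
               / (real k * (h - g) + (1 - g))) sums S
           \<and> X = X0 + (1 / \<alpha>) * (ln (F X / F0) + S)"
proof -
  define \<gamma> where "\<gamma> = h - g"
  have \<gamma>: "\<gamma> > 0" using hg by (simp add: \<gamma>_def)
  have g_eq: "g = real N * \<gamma> + 1" and h_eq: "h = (real N + 1) * \<gamma> + 1"
    using NC by (simp_all add: \<gamma>_def algebra_simps)
  have exponent: "real k * (h - g) + (1 - g) = (real k - real N) * \<gamma>" for k
    by (simp add: g_eq h_eq algebra_simps)
  have "S_primitive N \<gamma> (F X) - S_primitive N \<gamma> (F X0) = \<alpha> * (X - X0)"
  proof (rule separable_ode_solution[OF I X, where F = F and G = "S_primitive N \<gamma>"
        and U = "{0<..<1}" and \<phi> = "\<lambda>y. y powr g - y powr h"])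
    show "F x \<in> {0<..<1}" if "x \<in> I" for x using Frange[OF that] by simp
    show "(S_primitive N \<gamma> has_real_derivative 1 / (y powr g - y powr h)) (at y)"
      if "y \<in> {0<..<1}" for y
      using S_primitive_has_real_derivative[OF \<gamma>] that by (simp add: g_eq h_eq)
    show "y powr g - y powr h \<noteq> 0" if "y \<in> {0<..<1}" for y
      using that hg powr_less_mono'[of y g h] by simp
  qed (use ode in blast)
  moreover have "(\<lambda>k. if k = N then 0 else
             (F X powr ((real k - real N) * \<gamma>) - F0 powr ((real k - real N) * \<gamma>))
               / ((real k - real N) * \<gamma>))
         sums (S_primitive N \<gamma> (F X) - S_primitive N \<gamma> F0 - ln (F X / F0))"
    using S_series_sums[OF \<gamma>] Frange[OF X] F0 by blast
  ultimately show ?thesis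
    using alpha_pos init unfolding exponent by (auto simp: field_simps)
qed

end
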